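(* Let $A,B\in\mathbb R^{\mathcal N\times\mathcal N}$ with $A$ invertible, and assume that among the generalized eigenvalues $\lambda\in\mathbb C$ of $Av=\lambda Bv$ there is a unique positive one $\lambda>0$ of smallest modulus, and that it is simple. Let $u,u^*$, $k$, $M$, $\tilde u^*$, $P$, $P^*$ and the pseudo-inverses be as in the context. Let $u_N,u_N^*\in\mathbb R^{\mathcal N}$ with $\langle u_N^*,Au_N\rangle\ne0$, let $k_N:=\frac{\langle u_N^*,Bu_N\rangle}{\langle u_N^*,Au_N\rangle}$ satisfy $k_N\notin\sigma\big((PMP)|_{[\operatorname{Span}\{\tilde u^*\}]^\perp}\big)$ and $k_N\notin\sigma\big((P^*M^TP^* )|_{[\operatorname{Span}\{u\}]^\perp}\big)$, and let $$C_N^k:=\Big\|\big[P^*(P^*M^TP^*-k_NI)^+P^*\big]^T(M-kI)P(PMP-k_NI)^+PA^{-1}\Big\|.$$ Then $$C_N^k\le\frac{\|M-kI\|\,\|PA^{-1}\|}{\operatorname{dist}\big(k_N,\operatorname{Num}((PMP)|_{[\operatorname{Span}\{\tilde u^*\}]^\perp})\big)\;\operatorname{dist}\big(k_N,\operatorname{Num}((P^*M^TP^* )|_{[\operatorname{Span}\{u\}]^\perp})\big)},$$ where the right-hand side is read as $+\infty$ if one of the distances vanishes.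
   Context: $\mathbb R^{\mathcal N}$ carries the Euclidean inner product $\langle\cdot,\cdot\rangle$ and norm; matrix norms are induced operator norms. "Simple" means $k=1/\lambda$ is an algebraically simple eigenvalue of $M=A^{-1}B$. $u,u^*$ are unit vectors with $Au=\lambda Bu$, $A^Tu^*=\lambda B^Tu^*$; $\tilde u^*=A^Tu^*/\|A^Tu^*\|$; $P=I-\frac{u(\tilde u^* )^T}{\langle u,\tilde u^*\rangle}$, $P^*=I-\frac{\tilde u^*u^T}{\langle u,\tilde u^*\rangle}$ (here $\langle u,\tilde u^*\rangle\ne0$). $(PMP-k_NI)^+$ is the inverse of $(PMP-k_NI)|_{[\operatorname{Span}\{\tilde u^*\}]^\perp}$ on $[\operatorname{Span}\{\tilde u^*\}]^\perp$ and $0$ on $\operatorname{Span}\{u\}$; $(P^*M^TP^*-k_NI)^+$ is the inverse of $(P^*M^TP^*-k_NI)|_{[\operatorname{Span}\{u\}]^\perp}$ on $[\operatorname{Span}\{u\}]^\perp$ and $0$ on $\operatorname{Span}\{\tilde u^*\}$. For a linear map $Q$ of a subspace $W$ into itself, the numerical range is $\operatorname{Num}(Q)=\overline{\{\langle v,Qv\rangle: v\in W,\ \|v\|=1\}}$. *)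

theory Defs
  imports "HOL-Analysis.Analysis" "HOL-Computational_Algebra.Polynomial"
begin

definition cmat :: "real^'n^'m \<Rightarrow> complex^'n^'m" where
  "cmat A = (\<chi> i j. complex_of_real (A $ i $ j))"

definition gen_eigenvalue :: "real^'n^'n \<Rightarrow> real^'n^'n \<Rightarrow> complex \<Rightarrow> bool" where
  "gen_eigenvalue A B \<mu> \<longleftrightarrow>
     (\<exists>v::complex^'n. v \<noteq> 0 \<and> cmat A *v v = \<mu> *s (cmat B *v v))"

definition charpoly :: "real^'n^'n \<Rightarrow> real poly" where
  "charpoly M = det (\<chi> i j. (if i = j then [:0, 1:] else 0) - [:M $ i $ j:])"

definition alg_simple_eigenvalue :: "real^'n^'n \<Rightarrow> real \<Rightarrow> bool" where
  "alg_simple_eigenvalue M k \<longleftrightarrow> order k (charpoly M) = 1"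

definition outer :: "real^'n \<Rightarrow> real^'n \<Rightarrow> real^'n^'n" where
  "outer x y = (\<chi> i j. x $ i * y $ j)"

definition opnorm :: "real^'n^'m \<Rightarrow> real" where
  "opnorm X = onorm (\<lambda>x. X *v x)"

definition eigenvalue_on :: "real^'n^'n \<Rightarrow> (real^'n) set \<Rightarrow> real \<Rightarrow> bool" where
  "eigenvalue_on T W \<mu> \<longleftrightarrow> (\<exists>w\<in>W. w \<noteq> 0 \<and> T *v w = \<mu> *\<^sub>R w)"

definition pinv_on :: "real^'n^'n \<Rightarrow> (real^'n) set \<Rightarrow> (real^'n) set \<Rightarrow> real^'n^'n" where
  "pinv_on T W Z = (THE X. (\<forall>w\<in>W. X *v w \<in> W \<and> T *v (X *v w) = w) \<and> (\<forall>z\<in>Z. X *v z = 0))"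

definition num_range :: "real^'n^'n \<Rightarrow> (real^'n) set \<Rightarrow> real set" where
  "num_range T W = closure {v \<bullet> (T *v v) | v. v \<in> W \<and> norm v = 1}"

end

theory Submission
  imports Defs
begin

text \<open>
  Both pseudo-inverses in \<open>C\<^sub>N\<^sup>k\<close> are one matrix. The deflated operator
  \<open>L = PMP - k\<^sub>N I\<close> commutes with the oblique projection \<open>P\<close> and is injective on
  the hyperplane \<open>ut\<^sup>\<bottom>\<close>, so its pseudo-inverse \<open>X\<close> is the group inverse:
  \<open>LX = XL = P\<close> and \<open>PX = XP = X\<close>. These identities characterise \<open>X\<close>, and transposing
  them shows that the pseudo-inverse of \<open>L\<^sup>T = P\<^sup>* M\<^sup>T P\<^sup>* - k\<^sub>N I\<close> on
  \<open>u\<^sup>\<bottom>\<close> is \<open>X\<^sup>T\<close>. Hence \<open>C\<^sub>N\<^sup>k = \<parallel>X (M - kI) X P A\<^sup>-\<^sup>1\<parallel>\<close>.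

  If \<open>y \<in> ut\<^sup>\<bottom>\<close> and \<open>x = Xy\<close>, then \<open>\<langle>x, y\<rangle> = \<langle>x, PMPx\<rangle> - k\<^sub>N \<parallel>x\<parallel>\<^sup>2\<close>;
  since Rayleigh quotients lie in the numerical range, the first distance times \<open>\<parallel>x\<parallel>\<close>
  is at most \<open>\<parallel>y\<parallel>\<close>. This bounds the outer \<open>X\<close>. For the inner one, \<open>M - kI\<close>
  kills \<open>u\<close>, so only the component of \<open>Xh\<close> orthogonal to \<open>u\<close> matters, and on
  \<open>u\<^sup>\<bottom>\<close> the same identity holds with the quadratic form of \<open>P\<^sup>* M\<^sup>T P\<^sup>*\<close>.

  \<open>P\<close> is well defined because right and left eigenvectors of an algebraically simple
  eigenvalue are not orthogonal: otherwise Cramer's rule shows that \<open>(x - k)\<^sup>2\<close> divides the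
  characteristic polynomial.
\<close>

lemma matrix_vector_mult_mat: "mat c *v v = c *\<^sub>R (v::real^'n)"
  by (simp add: vec_eq_iff matrix_vector_mult_def mat_def if_distrib if_distribR cong: if_cong)

lemma transpose_diff: "transpose (A - B) = transpose A - (transpose B :: real^'n^'m)"
  by (simp add: transpose_def vec_eq_iff)

lemma matrix_vector_mult_outer: "outer x y *v v = (y \<bullet> v) *\<^sub>R x"
  by (simp add: vec_eq_iff outer_def matrix_vector_mult_def inner_vec_def sum_distrib_left mult_ac)

lemma transpose_outer: "transpose (outer x y) = outer y x"
  by (simp add: outer_def transpose_def vec_eq_iff mult.commute)

lemma inner_matrix_vector_mult_transpose: "x \<bullet> (A *v y) = (transpose A *v x) \<bullet> (y::real^'n)"
  by (simp add: dot_lmul_matrix)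

lemma norm_matrix_vector_mult_le_opnorm: "norm (N *v x) \<le> opnorm N * norm x"
  unfolding opnorm_def by (rule onorm) simp

lemma opnorm_nonneg: "0 \<le> opnorm N"
  unfolding opnorm_def by (simp add: onorm_pos_le)

lemma opnorm_le: "(\<And>x. norm (N *v x) \<le> K * norm x) \<Longrightarrow> opnorm N \<le> K"
  unfolding opnorm_def by (rule onorm_le)

lemma matrix_inv_inverse:
  assumes "invertible (A::real^'n^'n)"
  shows "A ** matrix_inv A = mat 1" and "matrix_inv A ** A = mat 1"
  using someI_ex[OF assms[unfolded invertible_def]] unfolding matrix_inv_def by auto

(* Projection onto the hyperplane orthogonal to b along a: the paper's P is oblique_proj u ut
   and P* is its transpose. *)
definition oblique_proj :: "real^'n \<Rightarrow> real^'n \<Rightarrow> real^'n^'n" where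
  "oblique_proj a b = mat 1 - (1 / (a \<bullet> b)) *\<^sub>R outer a b"

lemma oblique_proj_apply: "oblique_proj a b *v v = v - ((b \<bullet> v) / (a \<bullet> b)) *\<^sub>R a"
  by (simp add: oblique_proj_def matrix_vector_mult_diff_rdistrib matrix_vector_mult_outer
      scaleR_matrix_vector_assoc[symmetric])

lemma transpose_oblique_proj: "transpose (oblique_proj a b) = oblique_proj b a"
  by (simp add: oblique_proj_def transpose_diff transpose_scalar transpose_outer inner_commute)

lemma oblique_proj_fixes: "v \<bullet> b = 0 \<Longrightarrow> oblique_proj a b *v v = v"
  by (simp add: oblique_proj_apply inner_commute)

lemma inner_oblique_proj: "a \<bullet> b \<noteq> 0 \<Longrightarrow> (oblique_proj a b *v v) \<bullet> b = 0"
  by (simp add: oblique_proj_apply inner_diff_left inner_commute[of a b] inner_commute[of v b])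

lemma oblique_proj_kernel: "a \<bullet> b \<noteq> 0 \<Longrightarrow> oblique_proj a b *v (t *\<^sub>R a) = 0"
  by (simp add: oblique_proj_apply inner_commute)

lemma oblique_proj_idem:
  "a \<bullet> b \<noteq> 0 \<Longrightarrow> oblique_proj a b *v (oblique_proj a b *v v) = oblique_proj a b *v v"
  by (simp add: oblique_proj_fixes inner_oblique_proj)

lemma pinv_on_hyperplane_eqI:
  fixes L X :: "real^'n^'n"
  assumes ab: "a \<bullet> b \<noteq> 0"
    and LX: "L ** X = oblique_proj a b" and XL: "X ** L = oblique_proj a b"
    and QX: "oblique_proj a b ** X = X" and XQ: "X ** oblique_proj a b = X"
  shows "pinv_on L {v. v \<bullet> b = 0} (span {a}) = X"
  unfolding pinv_on_def
proof (rule the_equality)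
  let ?Q = "oblique_proj a b"
  have XQv: "X *v (?Q *v v) = X *v v" for v using XQ by (metis matrix_vector_mul_assoc)
  show "(\<forall>w\<in>{v. v \<bullet> b = 0}. X *v w \<in> {v. v \<bullet> b = 0} \<and> L *v (X *v w) = w) \<and>
        (\<forall>z\<in>span {a}. X *v z = 0)"
  proof (intro conjI ballI)
    fix w assume "w \<in> {v. v \<bullet> b = 0}"
    then have w: "?Q *v w = w" by (simp add: oblique_proj_fixes)
    have "X *v w = ?Q *v (X *v w)" using QX by (metis matrix_vector_mul_assoc)
    then show "X *v w \<in> {v. v \<bullet> b = 0}" using inner_oblique_proj[OF ab, of "X *v w"] by simp
    show "L *v (X *v w) = w" using LX w by (metis matrix_vector_mul_assoc)
  next
    fix z assume "z \<in> span {a}"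
    then obtain t where "z = t *\<^sub>R a" by (auto simp: span_singleton)
    then show "X *v z = 0" using XQv[of z] oblique_proj_kernel[OF ab] by simp
  qed
next
  let ?Q = "oblique_proj a b"
  fix Y assume Y: "(\<forall>w\<in>{v. v \<bullet> b = 0}. Y *v w \<in> {v. v \<bullet> b = 0} \<and> L *v (Y *v w) = w) \<and>
                  (\<forall>z\<in>span {a}. Y *v z = 0)"
  show "Y = X" unfolding matrix_eq
  proof
    fix v
    have "v - ?Q *v v \<in> span {a}" by (simp add: oblique_proj_apply span_base span_mul)
    then have "Y *v (v - ?Q *v v) = 0" using Y by blast
    then have YQ: "Y *v v = Y *v (?Q *v v)" by (simp add: matrix_vector_mult_diff_distrib)
    have "(?Q *v v) \<bullet> b = 0" by (rule inner_oblique_proj[OF ab])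
    then have LYQ: "L *v (Y *v (?Q *v v)) = ?Q *v v" and "(Y *v (?Q *v v)) \<bullet> b = 0" using Y by auto
    from this(2) have "?Q *v (Y *v (?Q *v v)) = Y *v (?Q *v v)" by (rule oblique_proj_fixes)
    moreover have "X *v v = ?Q *v (Y *v (?Q *v v))"
      using XL XQ LYQ by (metis matrix_vector_mul_assoc)
    ultimately show "Y *v v = X *v v" using YQ by simp
  qed
qed

lemma group_inverse_on_hyperplane_exists:
  fixes L :: "real^'n^'n"
  assumes ab: "a \<bullet> b \<noteq> 0"
    and comm: "L ** oblique_proj a b = oblique_proj a b ** L"
    and inj_on_hyperplane: "\<And>w. w \<bullet> b = 0 \<Longrightarrow> L *v w = 0 \<Longrightarrow> w = 0"
  obtains X where "L ** X = oblique_proj a b" and "X ** L = oblique_proj a b"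
    and "oblique_proj a b ** X = X" and "X ** oblique_proj a b = X"
proof -
  let ?Q = "oblique_proj a b"
  \<comment> \<open>\<open>G\<close> acts as \<open>L\<close> on the hyperplane and as the identity on \<open>span {a}\<close>;
    \<open>G\<^sup>-\<^sup>1 Q\<close> is the group inverse.\<close>
  define G where "G = L ** ?Q + (mat 1 - ?Q)"
  have QQ: "?Q *v (?Q *v v) = ?Q *v v" for v by (rule oblique_proj_idem[OF ab])
  have LQ: "L *v (?Q *v v) = ?Q *v (L *v v)" for v using comm by (metis matrix_vector_mul_assoc)
  have Gv: "G *v v = L *v (?Q *v v) + (v - ?Q *v v)" for v
    by (simp add: G_def matrix_vector_mult_add_rdistrib matrix_vector_mult_diff_rdistrib
        matrix_vector_mul_assoc)
  have QG: "?Q *v (G *v v) = G *v (?Q *v v)" for v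
    by (simp add: Gv QQ LQ matrix_vector_right_distrib matrix_vector_mult_diff_distrib)
  have GQ: "G *v (?Q *v v) = L *v (?Q *v v)" for v by (simp add: Gv QQ)
  have "inj ((*v) G)"
  proof (rule injI)
    fix x y assume "G *v x = G *v y"
    then have G0: "G *v (x - y) = 0" by (simp add: matrix_vector_mult_diff_distrib)
    then have "L *v (?Q *v (x - y)) = 0" using QG GQ by (metis matrix_vector_mult_0_right)
    then have "?Q *v (x - y) = 0" using inj_on_hyperplane inner_oblique_proj[OF ab] by blast
    then show "x = y" using G0 Gv[of "x - y"] by (simp add: matrix_vector_mult_diff_distrib)
  qed
  then obtain Gi where GiG: "Gi ** G = mat 1" using matrix_left_invertible_injective by blast
  then have GGi: "G ** Gi = mat 1" using matrix_left_right_inverse by blast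
  have QGi: "?Q *v (Gi *v v) = Gi *v (?Q *v v)" for v
    by (metis QG GGi GiG matrix_vector_mul_assoc matrix_vector_mul_lid)
  have X0v: "(Gi ** ?Q) *v v = Gi *v (?Q *v v)" for v by (simp add: matrix_vector_mul_assoc)
  show ?thesis
  proof (rule that[of "Gi ** ?Q"])
    show "L ** (Gi ** ?Q) = ?Q"
      unfolding matrix_eq by (metis X0v QGi GQ GGi matrix_vector_mul_assoc matrix_vector_mul_lid)
    show "(Gi ** ?Q) ** L = ?Q"
      unfolding matrix_eq by (metis X0v LQ GQ GiG matrix_vector_mul_assoc matrix_vector_mul_lid)
    show "?Q ** (Gi ** ?Q) = Gi ** ?Q"
      unfolding matrix_eq by (metis X0v QGi QQ matrix_vector_mul_assoc)
    show "(Gi ** ?Q) ** ?Q = Gi ** ?Q"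
      unfolding matrix_eq by (metis X0v QQ matrix_vector_mul_assoc)
  qed
qed

lemma pinv_on_hyperplane:
  fixes L :: "real^'n^'n"
  assumes ab: "a \<bullet> b \<noteq> 0"
    and comm: "L ** oblique_proj a b = oblique_proj a b ** L"
    and inj_on_hyperplane: "\<And>w. w \<bullet> b = 0 \<Longrightarrow> L *v w = 0 \<Longrightarrow> w = 0"
  defines "X \<equiv> pinv_on L {v. v \<bullet> b = 0} (span {a})"
  shows "L ** X = oblique_proj a b" and "X ** L = oblique_proj a b"
    and "oblique_proj a b ** X = X" and "X ** oblique_proj a b = X"
proof -
  obtain X0 where X0: "L ** X0 = oblique_proj a b" "X0 ** L = oblique_proj a b"
      "oblique_proj a b ** X0 = X0" "X0 ** oblique_proj a b = X0"
    using group_inverse_on_hyperplane_exists[OF ab comm inj_on_hyperplane] by blast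
  then have "X = X0" unfolding X_def by (rule pinv_on_hyperplane_eqI[OF ab])
  with X0 show "L ** X = oblique_proj a b" "X ** L = oblique_proj a b"
    "oblique_proj a b ** X = X" "X ** oblique_proj a b = X" by simp_all
qed

lemma transpose_pinv_on_hyperplane:
  fixes L :: "real^'n^'n"
  assumes ab: "a \<bullet> b \<noteq> 0"
    and comm: "L ** oblique_proj a b = oblique_proj a b ** L"
    and inj_transpose: "\<And>w. w \<bullet> a = 0 \<Longrightarrow> transpose L *v w = 0 \<Longrightarrow> w = 0"
  shows "transpose (pinv_on (transpose L) {v. v \<bullet> a = 0} (span {b}))
           = pinv_on L {v. v \<bullet> b = 0} (span {a})"
proof -
  let ?Y = "pinv_on (transpose L) {v. v \<bullet> a = 0} (span {b})"
  have ba: "b \<bullet> a \<noteq> 0" using ab by (simp add: inner_commute)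
  have "transpose L ** oblique_proj b a = oblique_proj b a ** transpose L"
    using arg_cong[OF comm, of transpose]
    by (simp add: matrix_transpose_mul transpose_oblique_proj)
  note Y = pinv_on_hyperplane[OF ba this inj_transpose]
  have "pinv_on L {v. v \<bullet> b = 0} (span {a}) = transpose ?Y"
  proof (rule pinv_on_hyperplane_eqI[OF ab])
    show "L ** transpose ?Y = oblique_proj a b"
      using arg_cong[OF Y(2), of transpose] by (simp add: matrix_transpose_mul transpose_oblique_proj)
    show "transpose ?Y ** L = oblique_proj a b"
      using arg_cong[OF Y(1), of transpose] by (simp add: matrix_transpose_mul transpose_oblique_proj)
    show "oblique_proj a b ** transpose ?Y = transpose ?Y"
      using arg_cong[OF Y(4), of transpose] by (simp add: matrix_transpose_mul transpose_oblique_proj)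
    show "transpose ?Y ** oblique_proj a b = transpose ?Y"
      using arg_cong[OF Y(3), of transpose] by (simp add: matrix_transpose_mul transpose_oblique_proj)
  qed
  then show ?thesis by simp
qed

lemma infdist_num_range_mult_norm_le:
  fixes R :: "real^'n^'n"
  assumes W: "subspace W" and x: "x \<in> W" and xw: "x \<bullet> w = x \<bullet> (R *v x) - \<mu> * (x \<bullet> x)"
  shows "infdist \<mu> (num_range R W) * norm x \<le> norm w"
proof (cases "x = 0")
  case False
  define v where "v = (1 / norm x) *\<^sub>R x"
  have nx: "norm x > 0" using False by simp
  have "v \<in> W" unfolding v_def using W x by (rule subspace_scale)
  moreover have "norm v = 1" using nx by (simp add: v_def)
  ultimately have "v \<bullet> (R *v v) \<in> num_range R W"
    unfolding num_range_def by (intro closure_subset[THEN subsetD]) blast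
  then have "infdist \<mu> (num_range R W) \<le> dist \<mu> (v \<bullet> (R *v v))"
    by (rule infdist_le)
  also have "dist \<mu> (v \<bullet> (R *v v)) = \<bar>x \<bullet> w\<bar> / (norm x)\<^sup>2"
    using nx xw
    by (simp add: v_def matrix_vector_mult_scaleR dist_real_def dot_square_norm power2_eq_square
        field_simps abs_minus_commute)
  also have "\<dots> \<le> norm x * norm w / (norm x)\<^sup>2"
    by (intro divide_right_mono Cauchy_Schwarz_ineq2) simp
  also have "\<dots> = norm w / norm x" using nx by (simp add: power2_eq_square)
  finally show ?thesis using nx by (simp add: field_simps)
qed simp
lemma det_eq_0_iff_kernel: "det (A::real^'n^'n) = 0 \<longleftrightarrow> (\<exists>v. v \<noteq> 0 \<and> A *v v = 0)"
  using det_eq_0_rank less_rank_noninjective vec.inj_iff_eq_0 by blast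

lemma poly_det: "poly (det (A::real poly^'n^'n)) x = det (\<chi> i j. poly (A $ i $ j) x)"
  unfolding det_def by (simp add: poly_sum poly_prod)

lemma poly_charpoly: "poly (charpoly M) x = det (mat x - M)"
  unfolding charpoly_def poly_det by (rule arg_cong[where f = det]) (simp add: vec_eq_iff mat_def)

lemma charpoly_nonzero: "charpoly (M::real^'n^'n) \<noteq> 0"
proof
  assume "charpoly M = 0"
  then have "det (mat (opnorm M + 1) - M) = 0" by (metis poly_0 poly_charpoly)
  then obtain v where v: "v \<noteq> 0" "(mat (opnorm M + 1) - M) *v v = 0"
    using det_eq_0_iff_kernel by blast
  then have "(opnorm M + 1) *\<^sub>R v = M *v v"
    by (simp add: matrix_vector_mult_diff_rdistrib matrix_vector_mult_mat)
  moreover have "norm ((opnorm M + 1) *\<^sub>R v) = (opnorm M + 1) * norm v"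
    using opnorm_nonneg[of M] by simp
  ultimately have "(opnorm M + 1) * norm v \<le> opnorm M * norm v"
    using norm_matrix_vector_mult_le_opnorm[of M v] by simp
  then show False using v(1) by simp
qed

definition charpoly_replace_col :: "real^'n^'n \<Rightarrow> 'n \<Rightarrow> real^'n \<Rightarrow> real poly" where
  "charpoly_replace_col M j u =
     det (\<chi> i l. if l = j then [:u $ i:] else (if i = l then [:0, 1:] else 0) - [:M $ i $ l:])"

lemma poly_charpoly_replace_col:
  "poly (charpoly_replace_col M j u) x = det (\<chi> i l. if l = j then u $ i else (mat x - M) $ i $ l)"
  unfolding charpoly_replace_col_def poly_det
  by (rule arg_cong[where f = det]) (simp add: vec_eq_iff mat_def)

lemma charpoly_replace_col_eigenvector:
  assumes Mu: "M *v u = k *\<^sub>R u"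
  shows "[:-k, 1:] * charpoly_replace_col M j u = smult (u $ j) (charpoly M)"
proof -
  let ?D = "charpoly_replace_col M j u"
  have "poly ([:-k, 1:] * ([:-k, 1:] * ?D)) x = poly ([:-k, 1:] * smult (u $ j) (charpoly M)) x" for x
  proof (cases "x = k")
    case False
    define v where "v = (1 / (x - k)) *\<^sub>R u"
    have Av: "(mat x - M) *v v = u"
      using False by (simp add: v_def matrix_vector_mult_diff_rdistrib matrix_vector_mult_mat
          matrix_vector_mult_scaleR Mu scaleR_diff_left[symmetric])
    have "poly ?D x = v $ j * poly (charpoly M) x"
      unfolding poly_charpoly_replace_col poly_charpoly
      using cramer_lemma[where A = "mat x - M" and k = j and x = v, unfolded Av] .
    then show ?thesis using False by (simp add: v_def field_simps)
  qed simp
  then have "[:-k, 1:] * ([:-k, 1:] * ?D) = [:-k, 1:] * smult (u $ j) (charpoly M)"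
    using poly_eq_poly_eq_iff by blast
  then show ?thesis by (metis mult_left_cancel pCons_eq_0_iff one_neq_zero)
qed

lemma charpoly_replace_col_root:
  fixes M :: "real^'n^'n"
  assumes Mw: "transpose M *v w = k *\<^sub>R w" and w: "w \<noteq> 0" and uw: "u \<bullet> w = 0"
  shows "poly (charpoly_replace_col M j u) k = 0"
proof -
  let ?R = "(\<chi> i l. if l = j then u $ i else (mat k - M) $ i $ l) :: real^'n^'n"
  have "transpose (mat k - M) *v w = 0"
    by (simp add: transpose_diff matrix_vector_mult_diff_rdistrib matrix_vector_mult_mat Mw
        del: transpose_matrix_vector)
  moreover have "(transpose ?R *v w) $ l = (if l = j then u \<bullet> w else (transpose (mat k - M) *v w) $ l)"
    for l by (simp add: matrix_vector_mult_def transpose_def inner_vec_def mult.commute)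
  ultimately have "transpose ?R *v w = 0" using uw by (simp add: vec_eq_iff del: transpose_matrix_vector)
  then have "det (transpose ?R) = 0" using w det_eq_0_iff_kernel by blast
  then show ?thesis by (simp add: poly_charpoly_replace_col)
qed

lemma alg_simple_eigenvalue_inner_nonzero:
  fixes M :: "real^'n^'n"
  assumes Mu: "M *v u = k *\<^sub>R u" and Mw: "transpose M *v w = k *\<^sub>R w"
    and u: "u \<noteq> 0" and w: "w \<noteq> 0" and simple: "alg_simple_eigenvalue M k"
  shows "u \<bullet> w \<noteq> 0"
proof
  assume uw: "u \<bullet> w = 0"
  obtain j where uj: "u $ j \<noteq> 0" using u by (metis vec_eq_iff zero_index)
  have "[:-k, 1:] dvd charpoly_replace_col M j u"
    using charpoly_replace_col_root[OF Mw w uw] poly_eq_0_iff_dvd by blast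
  then have "[:-k, 1:] ^ 2 dvd smult (u $ j) (charpoly M)"
    using charpoly_replace_col_eigenvector[OF Mu, of j] by (metis mult_dvd_mono power2_eq_square dvd_refl)
  then have "[:-k, 1:] ^ Suc (order k (charpoly M)) dvd charpoly M"
    using simple uj by (simp add: alg_simple_eigenvalue_def dvd_smult_iff numeral_2_eq_2)
  then show False using order_2 charpoly_nonzero by blast
qed

lemma pencil_right_eigenvector:
  fixes A B :: "real^'n^'n"
  assumes A: "invertible A" and Au: "A *v u = lam *\<^sub>R (B *v u)" and lam: "lam \<noteq> 0"
  shows "(matrix_inv A ** B) *v u = (1 / lam) *\<^sub>R u"
proof -
  have "B *v u = (1 / lam) *\<^sub>R (A *v u)" using Au lam by simp
  then show ?thesis
    by (simp add: matrix_vector_mul_assoc[symmetric] matrix_vector_mult_scaleR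
        matrix_vector_mul_assoc matrix_inv_inverse[OF A])
qed

lemma pencil_left_eigenvector:
  fixes A B :: "real^'n^'n"
  assumes A: "invertible A" and Aw: "transpose A *v w = lam *\<^sub>R (transpose B *v w)"
    and lam: "lam \<noteq> 0"
  shows "transpose (matrix_inv A ** B) *v (transpose A *v w) = (1 / lam) *\<^sub>R (transpose A *v w)"
proof -
  have "transpose (matrix_inv A) *v (transpose A *v w) = w"
    by (metis matrix_vector_mul_assoc matrix_transpose_mul matrix_inv_inverse(1)[OF A]
        transpose_mat matrix_vector_mul_lid)
  then have "transpose (matrix_inv A ** B) *v (transpose A *v w) = transpose B *v w"
    by (simp add: matrix_transpose_mul matrix_vector_mul_assoc[symmetric] del: transpose_matrix_vector)
  then show ?thesis using Aw lam by (simp del: transpose_matrix_vector)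
qed

lemma simple_pencil_eigenvectors:
  fixes A B :: "real^'n^'n"
  assumes A: "invertible A" and lam: "lam \<noteq> 0"
    and simple: "alg_simple_eigenvalue (matrix_inv A ** B) (1 / lam)"
    and u: "u \<noteq> 0" and Au: "A *v u = lam *\<^sub>R (B *v u)"
    and w: "w \<noteq> 0" and Aw: "transpose A *v w = lam *\<^sub>R (transpose B *v w)"
  defines "ut \<equiv> (1 / norm (transpose A *v w)) *\<^sub>R (transpose A *v w)"
  shows "(matrix_inv A ** B) *v u = (1 / lam) *\<^sub>R u"
    and "transpose (matrix_inv A ** B) *v ut = (1 / lam) *\<^sub>R ut"
    and "u \<bullet> ut \<noteq> 0"
proof -
  show Mu: "(matrix_inv A ** B) *v u = (1 / lam) *\<^sub>R u"
    by (rule pencil_right_eigenvector[OF A Au lam])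
  show Mut: "transpose (matrix_inv A ** B) *v ut = (1 / lam) *\<^sub>R ut"
    using pencil_left_eigenvector[OF A Aw lam]
    by (simp add: ut_def matrix_vector_mult_scaleR del: transpose_matrix_vector)
  have "transpose A *v w \<noteq> 0"
    using w inj_matrix_vector_mult[OF transpose_invertible[OF A]]
    by (metis injD matrix_vector_mult_0_right)
  then have "ut \<noteq> 0" by (simp add: ut_def)
  then show "u \<bullet> ut \<noteq> 0"
    by (rule alg_simple_eigenvalue_inner_nonzero[OF Mu Mut u _ simple])
qed

locale deflation =
  fixes M :: "real^'n^'n" and u ut :: "real^'n" and k \<mu> :: real
  assumes nonorth: "u \<bullet> ut \<noteq> 0"
    and right_eigenvector: "M *v u = k *\<^sub>R u"
    and left_eigenvector: "transpose M *v ut = k *\<^sub>R ut"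
    and not_eigenvalue:
      "\<not> eigenvalue_on (oblique_proj u ut ** M ** oblique_proj u ut) {v. v \<bullet> ut = 0} \<mu>"
begin

abbreviation "P \<equiv> oblique_proj u ut"
abbreviation "L \<equiv> P ** M ** P - mat \<mu>"
abbreviation "X \<equiv> pinv_on L {v. v \<bullet> ut = 0} (span {u})"
abbreviation "\<delta> \<equiv> infdist \<mu> (num_range (P ** M ** P) {v. v \<bullet> ut = 0})"
abbreviation "\<delta>' \<equiv>
  infdist \<mu> (num_range (transpose P ** transpose M ** transpose P) {v. v \<bullet> u = 0})"

lemma L_apply: "L *v v = P *v (M *v (P *v v)) - \<mu> *\<^sub>R v"
  by (simp add: matrix_vector_mult_diff_rdistrib matrix_vector_mul_assoc matrix_mul_assoc
      matrix_vector_mult_mat)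

lemma L_commute: "L ** P = P ** L"
proof -
  have "L *v (P *v v) = P *v (L *v v)" for v
    by (simp add: L_apply oblique_proj_idem[OF nonorth] matrix_vector_mult_diff_distrib
        matrix_vector_mult_scaleR)
  then show ?thesis by (simp add: matrix_eq matrix_vector_mul_assoc[symmetric])
qed

lemma L_injective: "v \<bullet> ut = 0 \<Longrightarrow> L *v v = 0 \<Longrightarrow> v = 0"
  using not_eigenvalue
  by (auto simp: eigenvalue_on_def matrix_vector_mult_diff_rdistrib matrix_vector_mult_mat)

lemmas pinv_on_identities = pinv_on_hyperplane[OF nonorth L_commute L_injective]

lemma pinv_apply:
  assumes "y \<bullet> ut = 0"
  shows "(X *v y) \<bullet> ut = 0" and "L *v (X *v y) = y" and "P *v (X *v y) = X *v y"
proof -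
  show PX: "P *v (X *v y) = X *v y" by (simp add: matrix_vector_mul_assoc pinv_on_identities(3))
  show "(X *v y) \<bullet> ut = 0" using inner_oblique_proj[OF nonorth, of "X *v y"] PX by simp
  show "L *v (X *v y) = y"
    by (simp add: matrix_vector_mul_assoc pinv_on_identities(1) oblique_proj_fixes[OF assms])
qed

lemma transpose_pinv:
  assumes "\<not> eigenvalue_on (transpose P ** transpose M ** transpose P) {v. v \<bullet> u = 0} \<mu>"
  shows "transpose (pinv_on (transpose P ** transpose M ** transpose P - mat \<mu>)
                      {v. v \<bullet> u = 0} (span {ut})) = X"
proof -
  have L_transpose: "transpose L = transpose P ** transpose M ** transpose P - mat \<mu>"
    by (simp add: transpose_diff matrix_transpose_mul matrix_mul_assoc)
  have "w \<bullet> u = 0 \<Longrightarrow> transpose L *v w = 0 \<Longrightarrow> w = 0" for w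
    using assms unfolding L_transpose
    by (auto simp: eigenvalue_on_def matrix_vector_mult_diff_rdistrib matrix_vector_mult_mat
        simp del: transpose_matrix_vector)
  from transpose_pinv_on_hyperplane[OF nonorth L_commute this] show ?thesis
    unfolding L_transpose .
qed

lemma shifted_range_orthogonal: "((M - mat k) *v v) \<bullet> ut = 0"
proof -
  have "ut \<bullet> (M *v v) = k * (ut \<bullet> v)"
    using inner_matrix_vector_mult_transpose[of ut M v] left_eigenvector
    by (simp del: transpose_matrix_vector)
  then show ?thesis
    by (simp add: matrix_vector_mult_diff_rdistrib matrix_vector_mult_mat inner_commute[of _ ut]
        inner_diff_right)
qed

lemma norm_pinv_le:
  assumes y: "y \<bullet> ut = 0"
  shows "\<delta> * norm (X *v y) \<le> norm y"
proof -
  define x where "x = X *v y"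
  have "y = (P ** M ** P) *v x - \<mu> *\<^sub>R x"
    using pinv_apply(2)[OF y]
    by (simp add: x_def matrix_vector_mult_diff_rdistrib matrix_vector_mult_mat)
  then have "x \<bullet> y = x \<bullet> ((P ** M ** P) *v x) - \<mu> * (x \<bullet> x)"
    by (simp add: inner_diff_right)
  moreover have "x \<in> {v. v \<bullet> ut = 0}" using pinv_apply(1)[OF y] by (simp add: x_def)
  ultimately show ?thesis
    unfolding x_def[symmetric] by (intro infdist_num_range_mult_norm_le[OF subspace_hyperplane2])
qed

lemma norm_shifted_pinv_le:
  assumes h: "h \<bullet> ut = 0"
  shows "\<delta>' * norm ((M - mat k) *v (X *v h)) \<le> opnorm (M - mat k) * norm h"
proof -
  define b where "b = X *v h"
  have uu: "u \<bullet> u \<noteq> 0" using nonorth by auto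
  \<comment> \<open>On \<open>u\<^sup>\<bottom>\<close> the quadratic forms of \<open>M\<close> and of \<open>P\<^sup>T M\<^sup>T P\<^sup>T\<close> agree.\<close>
  define z where "z = oblique_proj u u *v b"
  have zu: "z \<bullet> u = 0" unfolding z_def by (rule inner_oblique_proj[OF uu])
  define t where "t = (u \<bullet> b) / (u \<bullet> u)"
  have b_split: "b = z + t *\<^sub>R u" by (simp add: z_def t_def oblique_proj_apply)
  have "(M - mat k) *v u = 0"
    by (simp add: matrix_vector_mult_diff_rdistrib matrix_vector_mult_mat right_eigenvector)
  then have shift_b: "(M - mat k) *v b = (M - mat k) *v z"
    by (simp add: b_split matrix_vector_right_distrib matrix_vector_mult_scaleR)
  have zb: "z \<bullet> b = z \<bullet> z" using zu by (simp add: b_split inner_add_right inner_commute)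
  have zMb: "z \<bullet> (M *v b) = z \<bullet> (M *v z)"
    using zu by (simp add: b_split matrix_vector_right_distrib matrix_vector_mult_scaleR
        right_eigenvector inner_add_right inner_commute)
  have "(transpose M *v z) \<bullet> u = 0"
    using inner_matrix_vector_mult_transpose[of z M u] zu
    by (simp add: right_eigenvector inner_commute del: transpose_matrix_vector)
  then have RZ: "(transpose P ** transpose M ** transpose P) *v z = transpose M *v z"
    using zu by (simp add: transpose_oblique_proj oblique_proj_fixes matrix_vector_mul_assoc[symmetric]
        del: transpose_matrix_vector)
  have "h = P *v (M *v b) - \<mu> *\<^sub>R b"
    using pinv_apply[OF h] L_apply by (simp add: b_def)
  moreover have "z \<bullet> (P *v w) = z \<bullet> w" for w
    using inner_matrix_vector_mult_transpose[of z P w] zu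
    by (simp add: transpose_oblique_proj oblique_proj_fixes del: transpose_matrix_vector)
  ultimately have "z \<bullet> h = z \<bullet> (M *v z) - \<mu> * (z \<bullet> z)"
    by (simp add: inner_diff_right zb zMb)
  also have "z \<bullet> (M *v z) = z \<bullet> ((transpose P ** transpose M ** transpose P) *v z)"
    using inner_matrix_vector_mult_transpose[of z M z] by (simp add: RZ inner_commute del: transpose_matrix_vector)
  finally have "\<delta>' * norm z \<le> norm h"
    using zu by (intro infdist_num_range_mult_norm_le[OF subspace_hyperplane2]) simp_all
  moreover have "norm ((M - mat k) *v z) \<le> opnorm (M - mat k) * norm z"
    by (rule norm_matrix_vector_mult_le_opnorm)
  ultimately show ?thesis
    unfolding b_def[symmetric] shift_b
    by (smt (verit) infdist_nonneg mult_left_mono mult.left_commute opnorm_nonneg)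
qed

lemma opnorm_pinv_product_le:
  assumes "0 < \<delta>" and "0 < \<delta>'"
  shows "opnorm (X ** (M - mat k) ** P ** X ** P ** N)
           \<le> opnorm (M - mat k) * opnorm (P ** N) / (\<delta> * \<delta>')"
proof (rule opnorm_le)
  fix v
  define h where "h = P *v (N *v v)"
  define y where "y = (M - mat k) *v (X *v h)"
  have h: "h \<bullet> ut = 0" unfolding h_def by (rule inner_oblique_proj[OF nonorth])
  have "(X ** (M - mat k) ** P ** X ** P ** N) *v v = X *v y"
    by (simp add: y_def h_def matrix_vector_mul_assoc[symmetric] pinv_apply(3)[OF h[unfolded h_def]])
  moreover have "\<delta> * norm (X *v y) \<le> norm y"
    by (rule norm_pinv_le) (simp add: y_def shifted_range_orthogonal)
  moreover have "\<delta>' * norm y \<le> opnorm (M - mat k) * norm h"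
    unfolding y_def by (rule norm_shifted_pinv_le[OF h])
  moreover have "norm h \<le> opnorm (P ** N) * norm v"
    unfolding h_def matrix_vector_mul_assoc by (rule norm_matrix_vector_mult_le_opnorm)
  ultimately have "\<delta> * \<delta>' * norm ((X ** (M - mat k) ** P ** X ** P ** N) *v v)
                     \<le> opnorm (M - mat k) * opnorm (P ** N) * norm v"
    using assms opnorm_nonneg[of "M - mat k"]
    by (smt (verit) mult.commute mult.left_commute mult_left_mono)
  then show "norm ((X ** (M - mat k) ** P ** X ** P ** N) *v v)
               \<le> opnorm (M - mat k) * opnorm (P ** N) / (\<delta> * \<delta>') * norm v"
    using assms by (simp add: field_simps)
qed

end

theorem proposition4:
  fixes A B M P Ps :: "real^'n^'n"
    and u us ut uN usN :: "real^'n"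
    and lam k kN CNk :: real
  assumes A_inv: "invertible A"
    and lam_pos: "lam > 0"
    and lam_eig: "gen_eigenvalue A B (complex_of_real lam)"
    and lam_min: "\<forall>\<mu>. gen_eigenvalue A B \<mu> \<and> \<mu> \<noteq> complex_of_real lam \<longrightarrow> cmod \<mu> > lam"
    and M_def: "M = matrix_inv A ** B"
    and k_def: "k = 1 / lam"
    and simple: "alg_simple_eigenvalue M k"
    and u_unit: "norm u = 1" and u_eig: "A *v u = lam *\<^sub>R (B *v u)"
    and us_unit: "norm us = 1" and us_eig: "transpose A *v us = lam *\<^sub>R (transpose B *v us)"
    and ut_def: "ut = (1 / norm (transpose A *v us)) *\<^sub>R (transpose A *v us)"
    and P_def: "P = mat 1 - (1 / (u \<bullet> ut)) *\<^sub>R outer u ut"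
    and Ps_def: "Ps = mat 1 - (1 / (u \<bullet> ut)) *\<^sub>R outer ut u"
    and nonzero: "usN \<bullet> (A *v uN) \<noteq> 0"
    and kN_def: "kN = (usN \<bullet> (B *v uN)) / (usN \<bullet> (A *v uN))"
    and spec1: "\<not> eigenvalue_on (P ** M ** P) {v. v \<bullet> ut = 0} kN"
    and spec2: "\<not> eigenvalue_on (Ps ** transpose M ** Ps) {v. v \<bullet> u = 0} kN"
    and C_def: "CNk = opnorm (transpose (Ps ** pinv_on (Ps ** transpose M ** Ps - mat kN)
                                                  {v. v \<bullet> u = 0} (span {ut}) ** Ps)
                   ** (M - mat k) ** P
                   ** pinv_on (P ** M ** P - mat kN) {v. v \<bullet> ut = 0} (span {u})
                   ** P ** matrix_inv A)"
  shows "infdist kN (num_range (P ** M ** P) {v. v \<bullet> ut = 0}) \<noteq> 0 \<and>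
         infdist kN (num_range (Ps ** transpose M ** Ps) {v. v \<bullet> u = 0}) \<noteq> 0 \<longrightarrow>
         CNk \<le> opnorm (M - mat k) * opnorm (P ** matrix_inv A) /
               (infdist kN (num_range (P ** M ** P) {v. v \<bullet> ut = 0}) *
                infdist kN (num_range (Ps ** transpose M ** Ps) {v. v \<bullet> u = 0}))"
proof
  \<comment> \<open>Neither the minimality of \<open>lam\<close> nor the form of \<open>kN\<close> plays a role in the bound.\<close>
  assume "infdist kN (num_range (P ** M ** P) {v. v \<bullet> ut = 0}) \<noteq> 0 \<and>
          infdist kN (num_range (Ps ** transpose M ** Ps) {v. v \<bullet> u = 0}) \<noteq> 0"
  then have dist_pos: "0 < infdist kN (num_range (P ** M ** P) {v. v \<bullet> ut = 0})"
      "0 < infdist kN (num_range (Ps ** transpose M ** Ps) {v. v \<bullet> u = 0})"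
    by (simp_all add: order_less_le infdist_nonneg)
  have "lam \<noteq> 0" "u \<noteq> 0" "us \<noteq> 0" using lam_pos u_unit us_unit by auto
  from simple_pencil_eigenvectors[OF A_inv this(1) simple[unfolded M_def k_def] this(2) u_eig
      this(3) us_eig]
  have Mu: "M *v u = k *\<^sub>R u" and Mut: "transpose M *v ut = k *\<^sub>R ut"
    and nonorth: "u \<bullet> ut \<noteq> 0"
    by (simp_all add: M_def k_def ut_def)
  have P: "P = oblique_proj u ut" by (simp add: P_def oblique_proj_def)
  have Ps: "Ps = transpose (oblique_proj u ut)"
    unfolding transpose_oblique_proj by (simp add: Ps_def oblique_proj_def inner_commute)
  interpret D: deflation M u ut k kN
    using nonorth Mu Mut spec1 unfolding P by unfold_locales
  have "transpose (Ps ** pinv_on (Ps ** transpose M ** Ps - mat kN) {v. v \<bullet> u = 0} (span {ut}) ** Ps)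
          = pinv_on (P ** M ** P - mat kN) {v. v \<bullet> ut = 0} (span {u})"
    using D.transpose_pinv[OF spec2[unfolded Ps]] D.pinv_on_identities(3,4)
    by (simp add: Ps P matrix_transpose_mul matrix_mul_assoc)
  then show "CNk \<le> opnorm (M - mat k) * opnorm (P ** matrix_inv A) /
               (infdist kN (num_range (P ** M ** P) {v. v \<bullet> ut = 0}) *
                infdist kN (num_range (Ps ** transpose M ** Ps) {v. v \<bullet> u = 0}))"
    using D.opnorm_pinv_product_le[of "matrix_inv A"] dist_pos unfolding C_def P Ps by simp
qed

end
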